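(* For a directed graph $\vec G$ on $[n]$, let $\vec G_{\mathrm{fwd}}$ be the undirected graph whose edges are the forward edges of $\vec G$. Then: (i) $\mathcal{F}_{\vec G(n,p)}$ has the same distribution as $\mathcal{F}_{G(n,p)}$; (ii) $(\vec G(n,p))_{\mathrm{fwd}}$ has the same distribution as $G(n,p)$; (iii) one can couple $G(n,p)$ and $\vec G(n,p)$ as follows: first sample $G(n,p)$, which gives a depth-first ordering $(v_0,\dots,v_{n-1})$ of $[n]$; then let $\vec G_{\mathrm{fwd}}(n,p)=G(n,p)$ and add to it each of the possible back edges $(v_i,v_j)$, $j<i$, independently with probability $p$.
   Context: $[n]=\{1,\dots,n\}$. $\vec G(n,p)$: each of the $n(n-1)$ directed edges $(i,j)$, $i\ne j$, present independently with probability $p$. $G(n,p)$: each of the $\binom n2$ undirected edges present independently with probability $p$. Depth-first exploration. For a directed graph $\vec G$ (resp. undirected graph $G$) on $[n]$, define inductively for $i=0,\dots,n$ an ordered list $\mathcal O_i$ (open vertices) and a set $\mathcal A_i$ (explored vertices): $\mathcal O_0=(1)$, $\mathcal A_0=\emptyset$. Given $\mathcal O_i,\mathcal A_i$, let $v_i$ be the first element of $\mathcal O_i$, $\mathcal A_{i+1}=\mathcal A_i\cup\{v_i\}$, and $\mathcal N_i$ the set of out-neighbours (resp. neighbours) of $v_i$ not in $\mathcal O_i\cup\mathcal A_i$. $\mathcal O_{i+1}$ is obtained from $\mathcal O_i$ by removing $v_i$ and placing the elements of $\mathcal N_i$ in increasing order at the start (the smallest element of $\mathcal N_i$ becomes first);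 if this gives $\mathcal O_{i+1}=\emptyset$, instead let $\mathcal O_{i+1}$ consist of the smallest element of $[n]\setminus\mathcal A_{i+1}$. The forest $\mathcal F_{\vec G}$ (resp. $\mathcal F_G$) has an edge from $x$ to $y$ iff $x=v_i$ and $y\in\mathcal N_i$ for some $i$. The order $(v_0,\dots,v_{n-1})$ is the depth-first ordering. An edge $(v_i,v_j)$ of $\vec G$ is a forward edge if $i<j$ and a back edge if $j<i$. *)

theory Defs
  imports "HOL-Probability.Probability"
begin

definition random_subset :: "'a set \<Rightarrow> real \<Rightarrow> 'a set pmf" where
  "random_subset S p = map_pmf (\<lambda>f. {x\<in>S. f x}) (Pi_pmf S False (\<lambda>_. bernoulli_pmf p))"

definition dir_pairs :: "nat \<Rightarrow> (nat \<times> nat) set" where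
  "dir_pairs n = {(i,j). i \<in> {1..n} \<and> j \<in> {1..n} \<and> i \<noteq> j}"

definition undir_pairs :: "nat \<Rightarrow> nat set set" where
  "undir_pairs n = {{i,j} | i j. i \<in> {1..n} \<and> j \<in> {1..n} \<and> i \<noteq> j}"

definition dGnp :: "nat \<Rightarrow> real \<Rightarrow> (nat \<times> nat) set pmf" where
  "dGnp n p = random_subset (dir_pairs n) p"

definition Gnp :: "nat \<Rightarrow> real \<Rightarrow> nat set set pmf" where
  "Gnp n p = random_subset (undir_pairs n) p"

definition out_nbrs :: "(nat \<times> nat) set \<Rightarrow> nat \<Rightarrow> nat set" where
  "out_nbrs D v = {u. (v,u) \<in> D}"

definition nbrs :: "nat set set \<Rightarrow> nat \<Rightarrow> nat set" where
  "nbrs G v = {u. {v,u} \<in> G}"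

text \<open>State (O_i, A_i): ordered list of open vertices and set of explored vertices.\<close>
definition dfs_step :: "nat \<Rightarrow> (nat \<Rightarrow> nat set) \<Rightarrow> nat list \<times> nat set \<Rightarrow> nat list \<times> nat set" where
  "dfs_step n N st = (let Op = fst st; A = snd st; v = hd Op; A' = insert v A;
      Nv = {u \<in> N v. u \<notin> set Op \<union> A};
      O1 = sorted_list_of_set Nv @ tl Op
    in (if O1 = [] then [Min ({1..n} - A')] else O1, A'))"

definition dfs_state :: "nat \<Rightarrow> (nat \<Rightarrow> nat set) \<Rightarrow> nat \<Rightarrow> nat list \<times> nat set" where
  "dfs_state n N i = (dfs_step n N ^^ i) ([1], {})"

definition dfs_vertex :: "nat \<Rightarrow> (nat \<Rightarrow> nat set) \<Rightarrow> nat \<Rightarrow> nat" where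
  "dfs_vertex n N i = hd (fst (dfs_state n N i))"

definition dfs_new :: "nat \<Rightarrow> (nat \<Rightarrow> nat set) \<Rightarrow> nat \<Rightarrow> nat set" where
  "dfs_new n N i = {u \<in> N (dfs_vertex n N i).
      u \<notin> set (fst (dfs_state n N i)) \<union> snd (dfs_state n N i)}"

definition dfs_forest :: "nat \<Rightarrow> (nat \<Rightarrow> nat set) \<Rightarrow> (nat \<times> nat) set" where
  "dfs_forest n N = {(dfs_vertex n N i, y) | i y. i < n \<and> y \<in> dfs_new n N i}"

abbreviation forest_dir :: "nat \<Rightarrow> (nat \<times> nat) set \<Rightarrow> (nat \<times> nat) set" where
  "forest_dir n D \<equiv> dfs_forest n (out_nbrs D)"

abbreviation forest_undir :: "nat \<Rightarrow> nat set set \<Rightarrow> (nat \<times> nat) set" where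
  "forest_undir n G \<equiv> dfs_forest n (nbrs G)"

definition fwd_graph :: "nat \<Rightarrow> (nat \<times> nat) set \<Rightarrow> nat set set" where
  "fwd_graph n D = {{dfs_vertex n (out_nbrs D) i, dfs_vertex n (out_nbrs D) j} | i j.
      i < j \<and> j < n \<and> (dfs_vertex n (out_nbrs D) i, dfs_vertex n (out_nbrs D) j) \<in> D}"

definition back_pairs :: "nat \<Rightarrow> nat set set \<Rightarrow> (nat \<times> nat) set" where
  "back_pairs n G = {(dfs_vertex n (nbrs G) i, dfs_vertex n (nbrs G) j) | i j. j < i \<and> i < n}"

definition fwd_orient :: "nat \<Rightarrow> nat set set \<Rightarrow> (nat \<times> nat) set" where
  "fwd_orient n G = {(dfs_vertex n (nbrs G) i, dfs_vertex n (nbrs G) j) | i j.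
      i < j \<and> j < n \<and> {dfs_vertex n (nbrs G) i, dfs_vertex n (nbrs G) j} \<in> G}"

definition coupling :: "nat \<Rightarrow> real \<Rightarrow> (nat set set \<times> (nat \<times> nat) set) pmf" where
  "coupling n p = bind_pmf (Gnp n p) (\<lambda>G.
      map_pmf (\<lambda>B. (G, fwd_orient n G \<union> B)) (random_subset (back_pairs n G) p))"

end

theory Submission
  imports Defs
begin

text \<open>
  When it processes \<open>v\<^sub>i\<close>, the exploration only looks at
  edges from \<open>v\<^sub>i\<close> to vertices not yet explored, i.e. at forward edges, so it runs identically
  on \<open>D\<close> and on \<open>G\<close>: both have the same forest and ordering, and the forward graph of \<open>D\<close> is
  \<open>G\<close>. For a fixed ordering the directed pairs split into forward pairs, which correspond
  bijectively to the undirected pairs, and back pairs. Hence the probability of \<open>(G, D)\<close> is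
  \<open>p\<close> to the power \<open>|D|\<close> times \<open>1 - p\<close> to the power \<open>n(n - 1) - |D|\<close>, which is the
  probability of \<open>D\<close> in the directed model; since \<open>D\<close> determines \<open>G\<close>, the second marginal of
  the coupling is the directed model, and (i) and (ii) follow by pushing the coupling forward.
\<close>

section \<open>Random subsets\<close>

lemma set_pmf_random_subset: "set_pmf (random_subset S p) \<subseteq> Pow S"
  unfolding random_subset_def by auto

lemma pmf_random_subset:
  assumes S: "finite S" and X: "X \<subseteq> S" and p: "0 \<le> p" "p \<le> 1"
  shows "pmf (random_subset S p) X = p ^ card X * (1 - p) ^ (card S - card X)"
proof -
  define M where "M = Pi_pmf S False (\<lambda>_. bernoulli_pmf p)"
  define g where "g = (\<lambda>f. {x\<in>S. f x})"
  define c where "c = (\<lambda>x. x \<in> X)"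
  have "g -` {X} \<inter> set_pmf M = {c} \<inter> set_pmf M"
  proof (intro set_eqI iffI)
    fix f assume f: "f \<in> g -` {X} \<inter> set_pmf M"
    then have "\<forall>x. x \<notin> S \<longrightarrow> f x = False"
      using set_Pi_pmf_subset[OF S, of False "\<lambda>_. bernoulli_pmf p"] unfolding M_def by auto
    moreover have "{x\<in>S. f x} = X"
      using f by (simp add: g_def)
    ultimately have "f = c"
      using X unfolding c_def by (auto intro!: ext)
    then show "f \<in> {c} \<inter> set_pmf M"
      using f by simp
  qed (use X in \<open>auto simp: g_def c_def\<close>)
  have "pmf (random_subset S p) X = measure M (g -` {X} \<inter> set_pmf M)"
    unfolding random_subset_def M_def[symmetric] g_def[symmetric]
    by (simp add: pmf_map measure_Int_set_pmf)
  also have "\<dots> = pmf M c"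
    unfolding \<open>g -` {X} \<inter> set_pmf M = {c} \<inter> set_pmf M\<close>
    by (simp add: measure_Int_set_pmf measure_pmf_single)
  also have "\<dots> = (\<Prod>x\<in>S. pmf (bernoulli_pmf p) (c x))"
    unfolding M_def using X by (intro pmf_Pi') (auto simp: S c_def)
  also have "\<dots> = (\<Prod>x\<in>S - X. pmf (bernoulli_pmf p) (c x)) * (\<Prod>x\<in>X. pmf (bernoulli_pmf p) (c x))"
    using prod.subset_diff[OF X S] .
  also have "\<dots> = (1 - p) ^ card (S - X) * p ^ card X"
    using p by (simp add: c_def)
  finally show ?thesis
    using X S by (simp add: card_Diff_subset finite_subset)
qed

lemma pmf_random_subset_Un:
  assumes "finite S" "finite T" "S \<inter> T = {}" "X \<subseteq> S" "Y \<subseteq> T" "0 \<le> p" "p \<le> 1"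
  shows "pmf (random_subset (S \<union> T) p) (X \<union> Y) = pmf (random_subset S p) X * pmf (random_subset T p) Y"
proof -
  have "finite X" "finite Y"
    using assms finite_subset by blast+
  then have card_Un: "card (X \<union> Y) = card X + card Y" "card (S \<union> T) = card S + card T"
    using assms by (blast intro: card_Un_disjoint)+
  moreover have "card X \<le> card S" "card Y \<le> card T"
    using assms by (simp_all add: card_mono)
  ultimately have "card (S \<union> T) - card (X \<union> Y) = (card S - card X) + (card T - card Y)"
    by simp
  moreover have "finite (S \<union> T)" "X \<union> Y \<subseteq> S \<union> T"
    using assms by auto
  ultimately show ?thesis
    using assms card_Un(1) by (simp add: pmf_random_subset power_add)
qed

lemma pmf_random_subset_bij_betw:
  assumes f: "bij_betw f S T" and "finite S" "X \<subseteq> S" "0 \<le> p" "p \<le> 1"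
  shows "pmf (random_subset T p) (f ` X) = pmf (random_subset S p) X"
proof -
  have "card T = card S" "card (f ` X) = card X"
    using f assms(3) by (auto simp: bij_betw_same_card bij_betw_def card_image inj_on_subset)
  moreover have "finite T" "f ` X \<subseteq> T"
    using f assms(2,3) bij_betw_finite bij_betw_imp_surj_on by blast+
  ultimately show ?thesis
    using assms by (simp add: pmf_random_subset)
qed

lemma pmf_bind_map_Pair:
  "pmf (bind_pmf M (\<lambda>x. map_pmf (Pair x) (N x))) (a, b) = pmf M a * pmf (N a) b"
proof -
  have "pmf (map_pmf (Pair x) (N x)) (a, b) = indicator {a} x * pmf (N a) b" for x
  proof (cases "x = a")
    case True
    have "pmf (map_pmf (Pair a) (N a)) (Pair a b) = pmf (N a) b"
      by (rule pmf_map_inj') (simp add: inj_def)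
    then show ?thesis
      using True by simp
  qed (auto simp: pmf_eq_0_set_pmf)
  then show ?thesis
    by (simp add: pmf_bind measure_pmf_single)
qed

lemma pmf_eqI_on_support:
  assumes "\<And>x. x \<in> set_pmf M \<Longrightarrow> pmf M x = pmf N x"
  shows "M = N"
proof (rule ccontr)
  assume "M \<noteq> N"
  then obtain x where x: "pmf N x < pmf M x"
    using pmf_neq_exists_less[of N M] by auto
  then have "x \<in> set_pmf M"
    by (auto simp: set_pmf_eq)
  with x show False
    using assms by simp
qed

lemma map_pmf_eq_if_coupled:
  assumes "map_pmf fst C = M" and "map_pmf snd C = N"
    and "\<And>x y. (x, y) \<in> set_pmf C \<Longrightarrow> f x = g y"
  shows "map_pmf f M = map_pmf g N"
  unfolding assms(1,2)[symmetric] pmf.map_comp using assms(3) by (auto intro: map_pmf_cong)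

section \<open>Depth-first exploration\<close>

lemma dfs_state_Suc: "dfs_state n N (Suc i) = dfs_step n N (dfs_state n N i)"
  by (simp add: dfs_state_def)

lemma dfs_explored: "snd (dfs_state n N i) = dfs_vertex n N ` {..<i}"
  by (induction i) (simp_all add: dfs_state_def dfs_step_def dfs_vertex_def Let_def lessThan_Suc)

lemma dfs_open_invariant:
  assumes N: "\<And>v. N v \<subseteq> {1..n}" and "i < n"
  shows "fst (dfs_state n N i) \<noteq> [] \<and> distinct (fst (dfs_state n N i))
    \<and> set (fst (dfs_state n N i)) \<subseteq> {1..n} - snd (dfs_state n N i)
    \<and> card (snd (dfs_state n N i)) = i"
  using \<open>i < n\<close>
proof (induction i)
  case 0
  then show ?case by (simp add: dfs_state_def)
next
  case (Suc i)
  obtain Op A where st: "dfs_state n N i = (Op, A)" by fastforce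
  have IH: "Op \<noteq> []" "distinct Op" "set Op \<subseteq> {1..n} - A" "card A = i"
    using Suc by (simp_all add: st)
  define v where "v = hd Op"
  define O1 where "O1 = sorted_list_of_set {u \<in> N v. u \<notin> set Op \<union> A} @ tl Op"
  have step: "dfs_state n N (Suc i)
      = (if O1 = [] then [Min ({1..n} - insert v A)] else O1, insert v A)"
    by (simp add: dfs_state_Suc st dfs_step_def Let_def v_def O1_def)
  have v: "v \<in> set Op" "v \<notin> set (tl Op)" "set (tl Op) \<subseteq> set Op"
    using IH(1,2) by (cases Op; auto simp: v_def)+
  have "finite A"
    using dfs_explored[of n N i] by (simp add: st)
  then have card: "card (insert v A) = Suc i"
    using v(1) IH(3,4) by auto
  have O1: "distinct O1 \<and> set O1 \<subseteq> {1..n} - insert v A"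
    using N[of v] IH(2,3) v distinct_tl[of Op]
    by (auto simp: O1_def finite_subset[OF _ finite_atLeastAtMost])
  have "\<not> {1..n} \<subseteq> insert v A"
    using card_mono[of "insert v A" "{1..n}"] \<open>finite A\<close> card Suc.prems by auto
  then have "Min ({1..n} - insert v A) \<in> {1..n} - insert v A"
    by (intro Min_in) auto
  then show ?case
    using O1 card by (simp add: step)
qed

lemma dfs_vertex_fresh:
  assumes "\<And>v. N v \<subseteq> {1..n}" and "i < n"
  shows "dfs_vertex n N i \<in> {1..n} - dfs_vertex n N ` {..<i}"
proof -
  obtain Op A where st: "dfs_state n N i = (Op, A)"
    by fastforce
  have "Op \<noteq> []" "set Op \<subseteq> {1..n} - A"
    using dfs_open_invariant[of N n i] assms by (simp_all add: st)
  then have "hd Op \<in> {1..n} - A"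
    using hd_in_set by blast
  moreover have "dfs_vertex n N i = hd Op" "dfs_vertex n N ` {..<i} = A"
    using dfs_explored[of n N i] by (simp_all add: dfs_vertex_def st)
  ultimately show ?thesis
    by simp
qed

lemma inj_on_lessThan_fresh:
  fixes f :: "'a::linorder \<Rightarrow> 'b"
  assumes "\<And>i. i < n \<Longrightarrow> f i \<notin> f ` {..<i}"
  shows "inj_on f {..<n}"
proof (rule inj_onI)
  fix i j assume "i \<in> {..<n}" "j \<in> {..<n}" "f i = f j"
  then show "i = j"
    using assms[of i] assms[of j] by (metis imageI lessThan_iff linorder_neqE)
qed

lemma bij_betw_dfs_vertex:
  assumes "\<And>v. N v \<subseteq> {1..n}"
  shows "bij_betw (dfs_vertex n N) {..<n} {1..n}"
proof -
  have inj: "inj_on (dfs_vertex n N) {..<n}"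
    using dfs_vertex_fresh[of N n] assms by (intro inj_on_lessThan_fresh) blast
  moreover have "dfs_vertex n N ` {..<n} = {1..n}"
    using dfs_vertex_fresh[of N n] assms card_image[OF inj]
    by (intro card_subset_eq) auto
  ultimately show ?thesis
    by (simp add: bij_betw_def)
qed

lemma dfs_step_cong:
  assumes "N' (hd (fst st)) - snd st = N (hd (fst st)) - snd st"
  shows "dfs_step n N' st = dfs_step n N st"
proof -
  have "{u \<in> N' (hd (fst st)). u \<notin> set (fst st) \<union> snd st}
      = {u \<in> N (hd (fst st)). u \<notin> set (fst st) \<union> snd st}"
    using assms by blast
  then show ?thesis
    by (simp add: dfs_step_def Let_def)
qed

lemma dfs_state_cong:
  assumes "\<And>i. i < n \<Longrightarrow>
      N' (dfs_vertex n N i) - dfs_vertex n N ` {..<i} = N (dfs_vertex n N i) - dfs_vertex n N ` {..<i}"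
    and "i \<le> n"
  shows "dfs_state n N' i = dfs_state n N i"
  using \<open>i \<le> n\<close>
proof (induction i)
  case 0
  then show ?case by (simp add: dfs_state_def)
next
  case (Suc i)
  then have "dfs_state n N' (Suc i) = dfs_step n N' (dfs_state n N i)"
    by (simp add: dfs_state_Suc)
  also have "\<dots> = dfs_step n N (dfs_state n N i)"
    using assms(1)[of i, unfolded dfs_explored[symmetric]] Suc.prems
    by (intro dfs_step_cong) (simp add: dfs_vertex_def)
  finally show ?case
    by (simp add: dfs_state_Suc)
qed

lemma dfs_forest_eq_UN:
  "dfs_forest n N = (\<Union>i<n. Pair (dfs_vertex n N i) ` dfs_new n N i)"
  by (auto simp: dfs_forest_def)

lemma dfs_forest_cong:
  assumes "\<And>i. i < n \<Longrightarrow>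
      N' (dfs_vertex n N i) - dfs_vertex n N ` {..<i} = N (dfs_vertex n N i) - dfs_vertex n N ` {..<i}"
  shows "dfs_forest n N' = dfs_forest n N"
proof -
  have "dfs_vertex n N' i = dfs_vertex n N i" "dfs_new n N' i = dfs_new n N i" if "i < n" for i
    using dfs_state_cong[OF assms, of i] assms[of i, unfolded dfs_explored[symmetric]] that
    by (auto simp: dfs_vertex_def dfs_new_def)
  then show ?thesis
    unfolding dfs_forest_eq_UN by (intro SUP_cong) auto
qed

section \<open>Forward pairs of an ordering\<close>

definition fwd_pairs :: "(nat \<Rightarrow> nat) \<Rightarrow> nat \<Rightarrow> (nat \<times> nat) set" where
  "fwd_pairs w n = {(w i, w j) | i j. i < j \<and> j < n}"

lemma finite_fwd_pairs: "finite (fwd_pairs w n)"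
proof -
  have "fwd_pairs w n \<subseteq> (\<lambda>(i, j). (w i, w j)) ` ({..<n} \<times> {..<n})"
    by (auto simp: fwd_pairs_def)
  then show ?thesis
    by (rule finite_subset) simp
qed

lemma fwd_pairs_cong: "(\<And>i. i < n \<Longrightarrow> w i = w' i) \<Longrightarrow> fwd_pairs w n = fwd_pairs w' n"
  unfolding fwd_pairs_def by (metis (opaque_lifting) order.strict_trans)

lemma fwd_pairs_mem_iff:
  assumes "inj_on w {..<n}" and "i < n" and "j < n"
  shows "(w i, w j) \<in> fwd_pairs w n \<longleftrightarrow> i < j"
proof
  assume "(w i, w j) \<in> fwd_pairs w n"
  then obtain a b where "a < b" "b < n" "w i = w a" "w j = w b"
    by (auto simp: fwd_pairs_def)
  then show "i < j"
    using inj_onD[OF assms(1)] assms(2,3) by (metis lessThan_iff order.strict_trans)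
qed (use assms in \<open>auto simp: fwd_pairs_def\<close>)

lemma fwd_pairs_Int_converse:
  assumes "inj_on w {..<n}"
  shows "fwd_pairs w n \<inter> (fwd_pairs w n)\<inverse> = {}"
proof (rule equals0I)
  fix e assume "e \<in> fwd_pairs w n \<inter> (fwd_pairs w n)\<inverse>"
  then obtain i j where "i < j" "j < n" "(w j, w i) \<in> fwd_pairs w n"
    by (auto simp: fwd_pairs_def)
  then show False
    using fwd_pairs_mem_iff[OF assms, of j i] by simp
qed

lemma bij_betw_obtain_index:
  assumes "bij_betw w {..<n} {1..n}" and "x \<in> {1..n}"
  obtains i where "i < n" and "x = w i"
  using assms by (metis bij_betw_imp_surj_on imageE lessThan_iff)

lemma fwd_pairs_Un_converse:
  assumes w: "bij_betw w {..<n} {1..n}"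
  shows "fwd_pairs w n \<union> (fwd_pairs w n)\<inverse> = dir_pairs n"
proof (intro equalityI subsetI)
  fix e assume "e \<in> fwd_pairs w n \<union> (fwd_pairs w n)\<inverse>"
  then obtain i j where ij: "i < j" "j < n" "e = (w i, w j) \<or> e = (w j, w i)"
    by (auto simp: fwd_pairs_def)
  then have "w i \<in> {1..n}" "w j \<in> {1..n}" "w i \<noteq> w j"
    using bij_betw_apply[OF w] inj_onD[OF bij_betw_imp_inj_on[OF w]] by fastforce+
  then show "e \<in> dir_pairs n"
    using ij(3) by (auto simp: dir_pairs_def)
next
  fix e assume "e \<in> dir_pairs n"
  then obtain x y where "e = (x, y)" "x \<in> {1..n}" "y \<in> {1..n}" "x \<noteq> y"
    by (auto simp: dir_pairs_def)
  moreover obtain i j where "i < n" "x = w i" "j < n" "y = w j"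
    using bij_betw_obtain_index[OF w] \<open>x \<in> {1..n}\<close> \<open>y \<in> {1..n}\<close> by metis
  ultimately have "i < n" "j < n" "i \<noteq> j" "e = (w i, w j)"
    by auto
  then show "e \<in> fwd_pairs w n \<union> (fwd_pairs w n)\<inverse>"
    by (cases i j rule: linorder_cases) (auto simp: fwd_pairs_def)
qed

lemma bij_betw_doubleton_fwd_pairs:
  assumes w: "bij_betw w {..<n} {1..n}"
  shows "bij_betw (\<lambda>(x, y). {x, y}) (fwd_pairs w n) (undir_pairs n)"
proof (rule bij_betw_imageI)
  have inj: "inj_on w {..<n}"
    using w by (rule bij_betw_imp_inj_on)
  show "inj_on (\<lambda>(x, y). {x, y}) (fwd_pairs w n)"
  proof (rule inj_onI, clarify)
    fix x y x' y' assume "(x, y) \<in> fwd_pairs w n" "(x', y') \<in> fwd_pairs w n" "{x, y} = {x', y'}"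
    then show "x = x' \<and> y = y'"
      using fwd_pairs_Int_converse[OF inj] by (auto simp: doubleton_eq_iff)
  qed
  show "(\<lambda>(x, y). {x, y}) ` fwd_pairs w n = undir_pairs n"
  proof (intro equalityI subsetI)
    fix e assume "e \<in> (\<lambda>(x, y). {x, y}) ` fwd_pairs w n"
    then obtain x y where "e = {x, y}" "(x, y) \<in> fwd_pairs w n"
      by auto
    then have "(x, y) \<in> dir_pairs n"
      using fwd_pairs_Un_converse[OF w] by blast
    then show "e \<in> undir_pairs n"
      using \<open>e = {x, y}\<close> by (auto simp: dir_pairs_def undir_pairs_def)
  next
    fix e assume "e \<in> undir_pairs n"
    then obtain x y where "e = {x, y}" "(x, y) \<in> dir_pairs n"
      by (auto simp: undir_pairs_def dir_pairs_def)
    then show "e \<in> (\<lambda>(x, y). {x, y}) ` fwd_pairs w n"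
      using fwd_pairs_Un_converse[OF w] by (auto simp: insert_commute)
  qed
qed

section \<open>The coupling\<close>

lemma nbrs_subset: "G \<subseteq> undir_pairs n \<Longrightarrow> nbrs G v \<subseteq> {1..n}"
  unfolding nbrs_def undir_pairs_def by (auto simp: doubleton_eq_iff)

lemma bij_betw_dfs_vertex_nbrs:
  "G \<subseteq> undir_pairs n \<Longrightarrow> bij_betw (dfs_vertex n (nbrs G)) {..<n} {1..n}"
  using bij_betw_dfs_vertex nbrs_subset by blast

lemma back_pairs_eq: "back_pairs n G = (fwd_pairs (dfs_vertex n (nbrs G)) n)\<inverse>"
  by (auto simp: back_pairs_def fwd_pairs_def)

lemma fwd_orient_eq:
  "fwd_orient n G = fwd_pairs (dfs_vertex n (nbrs G)) n \<inter> (\<lambda>(x, y). {x, y}) -` G"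
  by (auto simp: fwd_orient_def fwd_pairs_def)

lemma fwd_graph_eq:
  "fwd_graph n D = (\<lambda>(x, y). {x, y}) ` (D \<inter> fwd_pairs (dfs_vertex n (out_nbrs D)) n)"
  by (auto simp: fwd_graph_def fwd_pairs_def image_iff)

lemma bij_betw_doubleton_fwd_orient:
  assumes "G \<subseteq> undir_pairs n"
  shows "bij_betw (\<lambda>(x, y). {x, y}) (fwd_orient n G) G"
proof -
  let ?w = "dfs_vertex n (nbrs G)"
  have bij: "bij_betw (\<lambda>(x, y). {x, y}) (fwd_pairs ?w n) (undir_pairs n)"
    using bij_betw_doubleton_fwd_pairs[OF bij_betw_dfs_vertex_nbrs[OF assms]] .
  have "(\<lambda>(x, y). {x, y}) ` fwd_orient n G = (\<lambda>(x, y). {x, y}) ` fwd_pairs ?w n \<inter> G"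
    unfolding fwd_orient_eq by blast
  also have "\<dots> = G"
    using bij assms by (auto simp: bij_betw_def)
  finally have "(\<lambda>(x, y). {x, y}) ` fwd_orient n G = G" .
  then show ?thesis
    using bij_betw_subset[OF bij] by (auto simp: fwd_orient_eq)
qed

context
  fixes n :: nat and G :: "nat set set" and B :: "(nat \<times> nat) set"
  assumes G: "G \<subseteq> undir_pairs n" and B: "B \<subseteq> back_pairs n G"
begin

lemma out_nbrs_fwd_orient_Un:
  assumes "i < n"
  shows "out_nbrs (fwd_orient n G \<union> B) (dfs_vertex n (nbrs G) i) - dfs_vertex n (nbrs G) ` {..<i}
       = nbrs G (dfs_vertex n (nbrs G) i) - dfs_vertex n (nbrs G) ` {..<i}"
    (is "out_nbrs ?D (?w i) - ?A = _")
proof -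
  have w: "bij_betw ?w {..<n} {1..n}"
    using bij_betw_dfs_vertex_nbrs[OF G] .
  then have inj: "inj_on ?w {..<n}"
    by (rule bij_betw_imp_inj_on)
  show ?thesis
  proof (intro equalityI subsetI)
    fix u assume u: "u \<in> out_nbrs ?D (?w i) - ?A"
    have "(?w i, u) \<notin> B"
    proof
      assume "(?w i, u) \<in> B"
      then obtain a b where "a < b" "b < n" "u = ?w a" "?w i = ?w b"
        using B by (auto simp: back_pairs_eq fwd_pairs_def)
      then show False
        using u inj_onD[OF inj] assms by fastforce
    qed
    then show "u \<in> nbrs G (?w i) - ?A"
      using u by (auto simp: out_nbrs_def nbrs_def fwd_orient_eq)
  next
    fix u assume u: "u \<in> nbrs G (?w i) - ?A"
    then have "u \<in> {1..n}"
      using nbrs_subset[OF G] by blast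
    then obtain j where j: "j < n" "u = ?w j"
      using bij_betw_obtain_index[OF w] by metis
    have "u \<noteq> ?w i"
      using u G by (auto simp: nbrs_def undir_pairs_def)
    with j u have "i < j"
      by (metis image_eqI lessThan_iff linorder_neqE DiffD2)
    then have "(?w i, u) \<in> fwd_pairs ?w n"
      using j assms fwd_pairs_mem_iff[OF inj] by simp
    moreover have "{?w i, u} \<in> G"
      using u by (simp add: nbrs_def)
    ultimately have "(?w i, u) \<in> fwd_orient n G"
      by (simp add: fwd_orient_eq)
    then show "u \<in> out_nbrs ?D (?w i) - ?A"
      using u by (simp add: out_nbrs_def)
  qed
qed

lemma dfs_vertex_fwd_orient_Un:
  "i < n \<Longrightarrow> dfs_vertex n (out_nbrs (fwd_orient n G \<union> B)) i = dfs_vertex n (nbrs G) i"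
  using dfs_state_cong[OF out_nbrs_fwd_orient_Un, of i] by (simp add: dfs_vertex_def)

lemma forest_dir_fwd_orient_Un: "forest_dir n (fwd_orient n G \<union> B) = forest_undir n G"
  by (rule dfs_forest_cong) (rule out_nbrs_fwd_orient_Un)

lemma fwd_graph_fwd_orient_Un: "fwd_graph n (fwd_orient n G \<union> B) = G"
proof -
  let ?w = "dfs_vertex n (nbrs G)"
  have inj: "inj_on ?w {..<n}"
    using bij_betw_dfs_vertex_nbrs[OF G] by (rule bij_betw_imp_inj_on)
  have "fwd_pairs (dfs_vertex n (out_nbrs (fwd_orient n G \<union> B))) n = fwd_pairs ?w n"
    by (rule fwd_pairs_cong) (rule dfs_vertex_fwd_orient_Un)
  moreover have "(fwd_orient n G \<union> B) \<inter> fwd_pairs ?w n = fwd_orient n G"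
    using B fwd_pairs_Int_converse[OF inj] by (auto simp: fwd_orient_eq back_pairs_eq)
  ultimately show ?thesis
    using bij_betw_doubleton_fwd_orient[OF G] by (simp add: fwd_graph_eq bij_betw_def)
qed

end

lemma fwd_orient_Int_back_pairs:
  assumes "G \<subseteq> undir_pairs n"
  shows "fwd_orient n G \<inter> back_pairs n G = {}"
  using fwd_pairs_Int_converse[OF bij_betw_imp_inj_on[OF bij_betw_dfs_vertex_nbrs[OF assms]]]
  by (auto simp: fwd_orient_eq back_pairs_eq)

lemma pmf_dGnp_fwd_orient_Un:
  assumes G: "G \<subseteq> undir_pairs n" and B: "B \<subseteq> back_pairs n G" and p: "0 \<le> p" "p \<le> 1"
  shows "pmf (dGnp n p) (fwd_orient n G \<union> B)
       = pmf (Gnp n p) G * pmf (random_subset (back_pairs n G) p) B"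
proof -
  let ?P = "fwd_pairs (dfs_vertex n (nbrs G)) n"
  have w: "bij_betw (dfs_vertex n (nbrs G)) {..<n} {1..n}"
    using bij_betw_dfs_vertex_nbrs[OF G] .
  have F: "fwd_orient n G \<subseteq> ?P"
    by (auto simp: fwd_orient_eq)
  have "pmf (dGnp n p) (fwd_orient n G \<union> B)
      = pmf (random_subset ?P p) (fwd_orient n G) * pmf (random_subset (?P\<inverse>) p) B"
    unfolding dGnp_def fwd_pairs_Un_converse[OF w, symmetric]
    using finite_fwd_pairs fwd_pairs_Int_converse[OF bij_betw_imp_inj_on[OF w]] F B p
    by (intro pmf_random_subset_Un) (auto simp: back_pairs_eq)
  also have "pmf (random_subset ?P p) (fwd_orient n G)
      = pmf (random_subset (undir_pairs n) p) ((\<lambda>(x, y). {x, y}) ` fwd_orient n G)"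
    using bij_betw_doubleton_fwd_pairs[OF w] finite_fwd_pairs F p
    by (intro pmf_random_subset_bij_betw[symmetric])
  also have "(\<lambda>(x, y). {x, y}) ` fwd_orient n G = G"
    using bij_betw_doubleton_fwd_orient[OF G] by (rule bij_betw_imp_surj_on)
  finally show ?thesis
    by (simp add: Gnp_def back_pairs_eq)
qed

lemma set_pmf_coupling:
  assumes "y \<in> set_pmf (coupling n p)"
  obtains G B where "y = (G, fwd_orient n G \<union> B)" and "G \<subseteq> undir_pairs n"
    and "B \<in> set_pmf (random_subset (back_pairs n G) p)"
  using assms set_pmf_random_subset unfolding coupling_def Gnp_def by fastforce

lemma coupling_fwd_graph_forest:
  assumes "(G, D) \<in> set_pmf (coupling n p)"
  shows "fwd_graph n D = G" and "forest_dir n D = forest_undir n G"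
proof -
  obtain B where D: "D = fwd_orient n G \<union> B" and G: "G \<subseteq> undir_pairs n"
    and B: "B \<subseteq> back_pairs n G"
    using set_pmf_coupling[OF assms] set_pmf_random_subset by (metis Pair_inject PowD subsetD)
  show "fwd_graph n D = G" and "forest_dir n D = forest_undir n G"
    unfolding D using fwd_graph_fwd_orient_Un[OF G B] forest_dir_fwd_orient_Un[OF G B] .
qed

lemma pmf_coupling:
  assumes G: "G \<subseteq> undir_pairs n" and B: "B \<in> set_pmf (random_subset (back_pairs n G) p)"
  shows "pmf (coupling n p) (G, fwd_orient n G \<union> B)
       = pmf (Gnp n p) G * pmf (random_subset (back_pairs n G) p) B"
proof -
  have "inj_on ((\<union>) (fwd_orient n G)) (Pow (back_pairs n G))"
  proof (rule inj_onI)
    fix X Y assume "X \<in> Pow (back_pairs n G)" "Y \<in> Pow (back_pairs n G)"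
      and "fwd_orient n G \<union> X = fwd_orient n G \<union> Y"
    then show "X = Y"
      using fwd_orient_Int_back_pairs[OF G] by blast
  qed
  then have inj: "inj_on ((\<union>) (fwd_orient n G)) (set_pmf (random_subset (back_pairs n G) p))"
    using set_pmf_random_subset by (rule inj_on_subset)
  have "coupling n p = bind_pmf (Gnp n p) (\<lambda>G. map_pmf (Pair G)
      (map_pmf ((\<union>) (fwd_orient n G)) (random_subset (back_pairs n G) p)))"
    by (simp add: coupling_def map_pmf_comp)
  then show ?thesis
    using B inj by (simp add: pmf_bind_map_Pair pmf_map_inj)
qed

lemma map_pmf_fst_coupling: "map_pmf fst (coupling n p) = Gnp n p"
  by (simp add: coupling_def map_bind_pmf map_pmf_comp bind_return_pmf')

lemma map_pmf_snd_coupling: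
  assumes "0 \<le> p" and "p \<le> 1"
  shows "map_pmf snd (coupling n p) = dGnp n p"
proof (rule pmf_eqI_on_support)
  fix D assume "D \<in> set_pmf (map_pmf snd (coupling n p))"
  then obtain G where GD: "(G, D) \<in> set_pmf (coupling n p)"
    by auto
  then obtain B where D: "D = fwd_orient n G \<union> B" and G: "G \<subseteq> undir_pairs n"
    and B: "B \<in> set_pmf (random_subset (back_pairs n G) p)"
    by (metis set_pmf_coupling Pair_inject)
  have "inj_on snd (set_pmf (coupling n p))"
    by (rule inj_onI) (metis coupling_fwd_graph_forest(1) prod.collapse)
  then have "pmf (map_pmf snd (coupling n p)) D = pmf (coupling n p) (G, D)"
    using pmf_map_inj[OF _ GD] by fastforce
  also have "\<dots> = pmf (Gnp n p) G * pmf (random_subset (back_pairs n G) p) B"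
    unfolding D using G B by (rule pmf_coupling)
  also have "\<dots> = pmf (dGnp n p) D"
    unfolding D using G B set_pmf_random_subset assms by (intro pmf_dGnp_fwd_orient_Un[symmetric]) blast+
  finally show "pmf (map_pmf snd (coupling n p)) D = pmf (dGnp n p) D" .
qed

theorem proposition2p1:
  fixes n :: nat and p :: real
  assumes "0 \<le> p" and "p \<le> 1"
  shows "map_pmf (forest_dir n) (dGnp n p) = map_pmf (forest_undir n) (Gnp n p)
         \<and> map_pmf (fwd_graph n) (dGnp n p) = Gnp n p
         \<and> (map_pmf fst (coupling n p) = Gnp n p
            \<and> map_pmf snd (coupling n p) = dGnp n p
            \<and> (\<forall>GD \<in> set_pmf (coupling n p). fwd_graph n (snd GD) = fst GD))"
proof -
  note fst = map_pmf_fst_coupling[of n p] and snd = map_pmf_snd_coupling[OF assms, of n]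
  have "map_pmf (forest_undir n) (Gnp n p) = map_pmf (forest_dir n) (dGnp n p)"
    by (rule map_pmf_eq_if_coupled[OF fst snd]) (simp add: coupling_fwd_graph_forest)
  moreover have "map_pmf id (Gnp n p) = map_pmf (fwd_graph n) (dGnp n p)"
    by (rule map_pmf_eq_if_coupled[OF fst snd]) (simp add: coupling_fwd_graph_forest)
  ultimately show ?thesis
    using fst snd coupling_fwd_graph_forest(1) by auto
qed

end
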